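(* For every integer $k\ge6$ and every real $r>1$ there is a constant $c>0$ such that for every even integer $n\ge2$ there exists a unit disk graph $G=(V,E)$ with $|V|=n$ such that each of the Yao-Yao graph $YY_k$, the Yao-Sink graph $YS_k$, and the Yao-Sparse-Sink graph $YES_k$ (with parameter $r$) of $G$ has weight at least $c\,n\cdot wt(MST(V))$.
   Context: Unit disk graph: $V$ a finite point set in the plane, $E=\{uv:|uv|\le1\}$ with $|uv|$ Euclidean distance. $wt(H)$ is the sum of Euclidean lengths of the edges of $H$ (viewed as an undirected graph); $MST(V)$ is a Euclidean minimum spanning tree of $V$. Cones: with $\theta=2\pi/k$, at each point $x$ the plane is partitioned into $k$ half-open half-closed cones with apex $x$ of angle $\theta$, bounded by $k$ equally spaced rays (same directions at every node). Identifiers: nodes have distinct IDs; $\mathrm{ID}(\overrightarrow{xy})=(|xy|,\mathrm{ID}(x),\mathrm{ID}(y))$ compared lexicographically; $\mathrm{ID}(xy)=\min\{\mathrm{ID}(\overrightarrow{xy}),\mathrm{ID}(\overrightarrow{yx})\}$. Yao step: for each node $x$ and each cone $K_x$ containing the other endpoint of some edge of $E$ incident to $x$, add to $E_Y$ the directed edge $\overrightarrow{xy}$ where $xy$ is such an edge with lowest $\mathrm{ID}(xy)$. Reverse Yao step: from $E_{YY}=E_Y$, for each node $v$ and each cone $K_v$, among edges $\overrightarrow{xv}\in E_Y$ with $x\in K_v$ keep only the one of smallest ID; $YY_k=(V,E_{YY})$. Sink step on a directed edge set $D$: for each node $v$ and cone $K_v$: let $I$ be the set of $x$ with $\overrightarrow{xv}\in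 D$, $x\in K_v$; set $I(v)\leftarrow I$, $J\leftarrow(v)$, $T(v)\leftarrow\emptyset$; repeat until $I$ is empty: remove the first vertex $x$ of $J$; for each cone $K_x$, let $w\in I(x)\cap K_x$ minimize $\mathrm{ID}(\overrightarrow{wx})$ (if any), add $\overrightarrow{wx}$ to $T(v)$, move $w$ from $I$ to $J$, set $I(w)\leftarrow I(x)\cap K_x$; output the union of all $T(v)$. $YS_k$ is the Sink step applied to $E_Y$. Filtering step (parameter $r>1$): for each node $v$ and cone $K_v$, let $F$ be the set of $\overrightarrow{xv}\in E_Y$ with $x\in K_v$; if nonempty let $\overrightarrow{uv}$ be its minimum-ID edge, let $F_i=\{\overrightarrow{ab}\in F:|uv|r^{i-1}\le|ab|<|uv|r^i\}$ for $i\ge1$, and put into $E_{YE}$ the smallest-ID edge of each nonempty $F_i$. $YES_k$ is the Sink step applied to $E_{YE}$. All outputs are viewed as undirected graphs. *)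

theory Defs
  imports "HOL-Analysis.Analysis"
begin

text \<open>Points of the plane are complex numbers; distance is the Euclidean distance.\<close>

text \<open>Cone partition: \<theta> = 2 pi / k, rays in the directions phi + j \<theta> (j = 0..k-1), the same
  at every node.  Cone number i at apex x is the half-open sector of directions
  [phi + i \<theta>, phi + (i+1) \<theta>); the apex itself belongs to no cone.\<close>
definition cone_of :: "real \<Rightarrow> nat \<Rightarrow> complex \<Rightarrow> complex \<Rightarrow> nat" where
  "cone_of phi k x y = nat \<lfloor>real k * frac ((Arg (y - x) - phi) / (2 * pi))\<rfloor>"

definition incone :: "real \<Rightarrow> nat \<Rightarrow> complex \<Rightarrow> nat \<Rightarrow> complex \<Rightarrow> bool" where
  "incone phi k x i y \<longleftrightarrow> y \<noteq> x \<and> cone_of phi k x y = i"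

definition dkey :: "(complex \<Rightarrow> nat) \<Rightarrow> complex \<Rightarrow> complex \<Rightarrow> real \<times> nat \<times> nat" where
  "dkey ID x y = (dist x y, ID x, ID y)"

fun klt :: "real \<times> nat \<times> nat \<Rightarrow> real \<times> nat \<times> nat \<Rightarrow> bool" where
  "klt (a1, b1, c1) (a2, b2, c2) \<longleftrightarrow> a1 < a2 \<or> (a1 = a2 \<and> (b1 < b2 \<or> (b1 = b2 \<and> c1 < c2)))"

definition ukey :: "(complex \<Rightarrow> nat) \<Rightarrow> complex \<Rightarrow> complex \<Rightarrow> real \<times> nat \<times> nat" where
  "ukey ID x y = (if klt (dkey ID y x) (dkey ID x y) then dkey ID y x else dkey ID x y)"

definition amin :: "('a \<Rightarrow> real \<times> nat \<times> nat) \<Rightarrow> 'a set \<Rightarrow> 'a" where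
  "amin f S = (THE s. s \<in> S \<and> (\<forall>t\<in>S. t \<noteq> s \<longrightarrow> klt (f s) (f t)))"

definition udg :: "complex set \<Rightarrow> (complex \<times> complex) set" where
  "udg V = {(x, y). x \<in> V \<and> y \<in> V \<and> x \<noteq> y \<and> dist x y \<le> 1}"

definition yao :: "real \<Rightarrow> nat \<Rightarrow> (complex \<Rightarrow> nat) \<Rightarrow> complex set \<Rightarrow> (complex \<times> complex) set" where
  "yao phi k ID V = (\<Union>x\<in>V. \<Union>i\<in>{..<k}.
      (let N = {y. (x, y) \<in> udg V \<and> incone phi k x i y}
       in if N = {} then {} else {(x, amin (ukey ID x) N)}))"

definition yaoyao :: "real \<Rightarrow> nat \<Rightarrow> (complex \<Rightarrow> nat) \<Rightarrow> complex set \<Rightarrow> (complex \<times> complex) set" where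
  "yaoyao phi k ID V = (\<Union>v\<in>V. \<Union>i\<in>{..<k}.
      (let F = {(a, b). (a, b) \<in> yao phi k ID V \<and> b = v \<and> incone phi k v i a}
       in if F = {} then {} else {amin (\<lambda>(a, b). dkey ID a b) F}))"

text \<open>The tree T(x) built by the Sink procedure from node x whose current set is I(x) = S.
  The breadth-first procedure of the paper builds, for each cone K_x with I(x) \<inter> K_x
  nonempty, the edge wx-> (w of minimal ID(wx->)) and then recursively the same
  construction from w with I(w) = I(x) \<inter> K_x; the order of processing is irrelevant.
  The first argument is fuel (recursion depth); Suc (card V) always suffices.\<close>
fun sink_tree :: "real \<Rightarrow> nat \<Rightarrow> (complex \<Rightarrow> nat) \<Rightarrow> nat \<Rightarrow> complex \<Rightarrow> complex set
                  \<Rightarrow> (complex \<times> complex) set" where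
  "sink_tree phi k ID 0 x S = {}"
| "sink_tree phi k ID (Suc n) x S = (\<Union>i\<in>{..<k}.
      (let C = {y \<in> S. incone phi k x i y}
       in if C = {} then {}
          else (let w = amin (\<lambda>w. dkey ID w x) C
                in insert (w, x) (sink_tree phi k ID n w C))))"

definition sink :: "real \<Rightarrow> nat \<Rightarrow> (complex \<Rightarrow> nat) \<Rightarrow> complex set \<Rightarrow> (complex \<times> complex) set
                    \<Rightarrow> (complex \<times> complex) set" where
  "sink phi k ID V D = (\<Union>v\<in>V. \<Union>i\<in>{..<k}.
      sink_tree phi k ID (Suc (card V)) v {x. (x, v) \<in> D \<and> incone phi k v i x})"

definition yaosink :: "real \<Rightarrow> nat \<Rightarrow> (complex \<Rightarrow> nat) \<Rightarrow> complex set \<Rightarrow> (complex \<times> complex) set" where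
  "yaosink phi k ID V = sink phi k ID V (yao phi k ID V)"

definition filtering :: "real \<Rightarrow> nat \<Rightarrow> (complex \<Rightarrow> nat) \<Rightarrow> real \<Rightarrow> complex set
                         \<Rightarrow> (complex \<times> complex) set" where
  "filtering phi k ID r V = (\<Union>v\<in>V. \<Union>i\<in>{..<k}.
      (let F = {(a, b). (a, b) \<in> yao phi k ID V \<and> b = v \<and> incone phi k v i a}
       in if F = {} then {}
          else (let L = dist (fst (amin (\<lambda>(a, b). dkey ID a b) F)) v
                in \<Union>j\<in>{1::nat..}.
                   (let Fj = {(a, b) \<in> F. L * r ^ (j - 1) \<le> dist a b \<and> dist a b < L * r ^ j}
                    in if Fj = {} then {} else {amin (\<lambda>(a, b). dkey ID a b) Fj}))))"

definition yaosparsesink :: "real \<Rightarrow> nat \<Rightarrow> (complex \<Rightarrow> nat) \<Rightarrow> real \<Rightarrow> complex set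
                             \<Rightarrow> (complex \<times> complex) set" where
  "yaosparsesink phi k ID r V = sink phi k ID V (filtering phi k ID r V)"

text \<open>Weight of a directed edge set viewed as an undirected graph: each undirected edge
  occurs twice in the symmetric closure.\<close>
definition wt :: "(complex \<times> complex) set \<Rightarrow> real" where
  "wt D = (\<Sum>p \<in> D \<union> converse D. dist (fst p) (snd p)) / 2"

definition elen :: "complex set \<Rightarrow> real" where
  "elen e = (THE d. \<exists>x y. e = {x, y} \<and> d = dist x y)"

definition spanning_tree :: "complex set \<Rightarrow> complex set set \<Rightarrow> bool" where
  "spanning_tree V T \<longleftrightarrow>
     T \<subseteq> {{x, y} | x y. x \<in> V \<and> y \<in> V \<and> x \<noteq> y} \<and>
     card T = card V - 1 \<and>
     (\<forall>x\<in>V. \<forall>y\<in>V. (x, y) \<in> {(a, b). {a, b} \<in> T}\<^sup>*)"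

definition wt_MST :: "complex set \<Rightarrow> real" where
  "wt_MST V = Min ((\<lambda>T. \<Sum>e\<in>T. elen e) ` {T. spanning_tree V T})"

end

theory Submission
  imports Defs
begin

(*
  Two parallel columns of m points at horizontal distance 1 and tiny vertical spacing d
  (a "ladder") have an MST of weight at most 1 + 2m\<^sup>2d, i.e. O(1) for d = 1/(2m\<^sup>2).
  The only unit-disk edges are the vertical ones inside a column and the m horizontal rungs
  of length 1.  With at least four cones, a horizontal and a vertical direction never share
  a cone, so each rung is the unique UDG edge in its cone at either end; in particular it is
  the only Yao edge entering its right end from the cone containing its left end.  A lone
  incoming Yao edge survives the reverse Yao step, the Sink step and the filtering step, so
  all three graphs contain every rung and weigh at least m = n/2, i.e. \<Omega>(n) times the
  MST weight.
*)

lemma cone_of_less: "k > 0 \<Longrightarrow> cone_of phi k x y < k"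
  unfolding cone_of_def
  by (simp add: nat_less_iff floor_less_iff frac_lt_1)

lemma abs_frac_diff_ge_quarter:
  fixes u1 u2 :: real
  assumes "4 * (u1 - u2) = 2 * of_int d + 1"
  shows "\<bar>frac u1 - frac u2\<bar> \<ge> 1/4"
proof -
  define e where "e = 2 * d + 1 - 4 * (\<lfloor>u1\<rfloor> - \<lfloor>u2\<rfloor>)"
  have "e \<noteq> 0" unfolding e_def by presburger
  hence "\<bar>real_of_int e\<bar> \<ge> 1" by linarith
  moreover have "4 * (frac u1 - frac u2) = of_int e"
    using assms unfolding e_def frac_def by simp
  ultimately show ?thesis by (simp add: abs_if split: if_splits)
qed

lemma cone_of_neq_if_quarter_turn:
  assumes "k \<ge> 4" and "Arg (y1 - x1) - Arg (y2 - x2) = (2 * of_int d + 1) * pi / 2"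
  shows "cone_of phi k x1 y1 \<noteq> cone_of phi k x2 y2"
proof
  assume same: "cone_of phi k x1 y1 = cone_of phi k x2 y2"
  define u1 where "u1 = (Arg (y1 - x1) - phi) / (2 * pi)"
  define u2 where "u2 = (Arg (y2 - x2) - phi) / (2 * pi)"
  have "4 * (u1 - u2) = 2 * of_int d + 1"
    using assms(2) unfolding u1_def u2_def by (simp add: field_simps)
  hence quarter: "\<bar>frac u1 - frac u2\<bar> \<ge> 1/4" by (rule abs_frac_diff_ge_quarter)
  have "nat \<lfloor>real k * frac u1\<rfloor> = nat \<lfloor>real k * frac u2\<rfloor>"
    using same unfolding cone_of_def u1_def u2_def .
  hence "\<lfloor>real k * frac u1\<rfloor> = \<lfloor>real k * frac u2\<rfloor>"
    by (simp add: eq_nat_nat_iff)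
  hence "\<bar>real k * (frac u1 - frac u2)\<bar> < 1"
    using floor_correct[of "real k * frac u1"] floor_correct[of "real k * frac u2"]
    by (simp add: right_diff_distrib abs_less_iff) linarith
  moreover have "real k * \<bar>frac u1 - frac u2\<bar> \<ge> 4 * (1/4)"
    using assms(1) quarter by (intro mult_mono) auto
  ultimately show False by (simp add: abs_mult)
qed

lemma Arg_of_imaginary:
  assumes "Re z = 0" "z \<noteq> 0"
  shows "Arg z = pi/2 \<or> Arg z = - (pi/2)"
  using Arg_Re_nonneg[of z] Arg_Re_pos[of z] assms by linarith

lemma Arg_of_real_nonzero:
  assumes "Im z = 0" "z \<noteq> 0"
  shows "Arg z = 0 \<or> Arg z = pi"
proof -
  have "z = of_real (Re z)" using assms(1) by (simp add: complex_eq_iff)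
  thus ?thesis by (metis Arg_of_real)
qed

lemma cone_of_horizontal_neq_vertical:
  assumes "k \<ge> 4" and "Im (y1 - x1) = 0" "y1 \<noteq> x1" and "Re (y2 - x2) = 0" "y2 \<noteq> x2"
  shows "cone_of phi k x1 y1 \<noteq> cone_of phi k x2 y2"
proof -
  have h: "Arg (y1 - x1) = 0 \<or> Arg (y1 - x1) = pi"
    using assms(2,3) by (intro Arg_of_real_nonzero) auto
  have v: "Arg (y2 - x2) = pi/2 \<or> Arg (y2 - x2) = - (pi/2)"
    using assms(4,5) by (intro Arg_of_imaginary) auto
  obtain d :: int where "Arg (y1 - x1) - Arg (y2 - x2) = (2 * of_int d + 1) * pi / 2"
    using h v by (elim disjE) (rule that[of "-1"] that[of 0] that[of 0] that[of 1]; simp add: field_simps)+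
  thus ?thesis using assms(1) by (rule cone_of_neq_if_quarter_turn[rotated])
qed

lemma klt_asym: "klt a b \<Longrightarrow> \<not> klt b a"
  by (cases a; cases b) auto

lemma klt_trans: "klt a b \<Longrightarrow> klt b c \<Longrightarrow> klt a c"
  by (cases a; cases b; cases c) auto

lemma klt_total: "a \<noteq> b \<Longrightarrow> klt a b \<or> klt b a"
  by (cases a; cases b) auto

lemma klt_least_exists:
  assumes "finite S" "S \<noteq> {}" "inj_on f S"
  shows "\<exists>s\<in>S. \<forall>t\<in>S. t \<noteq> s \<longrightarrow> klt (f s) (f t)"
  using assms
proof (induction S rule: finite_ne_induct)
  case (insert x F)
  then obtain s where s: "s \<in> F" "\<forall>t\<in>F. t \<noteq> s \<longrightarrow> klt (f s) (f t)" by auto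
  have "f x \<noteq> f s" using insert s(1) by (auto dest: inj_onD)
  then consider "klt (f x) (f s)" | "klt (f s) (f x)" using klt_total by blast
  then show ?case
  proof cases
    case 1
    then show ?thesis using s insert.hyps by (intro bexI[of _ x]) (auto intro: klt_trans)
  next
    case 2
    then show ?thesis using s by (intro bexI[of _ s]) auto
  qed
qed simp

lemma amin_in:
  assumes "finite S" "S \<noteq> {}" "inj_on f S"
  shows "amin f S \<in> S"
proof -
  obtain s where s: "s \<in> S" "\<forall>t\<in>S. t \<noteq> s \<longrightarrow> klt (f s) (f t)"
    using klt_least_exists[OF assms] by blast
  have "amin f S = s"
    unfolding amin_def
  proof (rule the_equality)
    fix s' assume s': "s' \<in> S \<and> (\<forall>t\<in>S. t \<noteq> s' \<longrightarrow> klt (f s') (f t))"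
    show "s' = s"
    proof (rule ccontr)
      assume "s' \<noteq> s"
      with s s' have "klt (f s) (f s')" "klt (f s') (f s)" by auto
      then show False using klt_asym by blast
    qed
  qed (use s in blast)
  with s show ?thesis by simp
qed

lemma amin_singleton [simp]: "amin f {a} = a"
  unfolding amin_def by (rule the_equality) auto

lemma udg_subset: "udg V \<subseteq> V \<times> V"
  unfolding udg_def by auto

lemma ukey_inj_on:
  assumes "inj_on ID V" "x \<in> V"
  shows "inj_on (ukey ID x) (V - {x})"
proof (rule inj_onI)
  fix y1 y2 assume y: "y1 \<in> V - {x}" "y2 \<in> V - {x}" and eq: "ukey ID x y1 = ukey ID x y2"
  have "ID y1 \<noteq> ID x" "ID y2 \<noteq> ID x" using y assms by (auto dest: inj_onD)
  with eq have "ID y1 = ID y2" unfolding ukey_def dkey_def by (auto split: if_splits)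
  with y assms(1) show "y1 = y2" by (auto dest: inj_onD)
qed

lemma dkey_inj_on:
  assumes "inj_on ID V"
  shows "inj_on (\<lambda>(a, b). dkey ID a b) (V \<times> V)"
  using assms unfolding dkey_def by (auto intro!: inj_onI dest: inj_onD)

lemma yao_subset_udg:
  assumes "inj_on ID V" "finite V"
  shows "yao phi k ID V \<subseteq> udg V"
proof
  fix e assume "e \<in> yao phi k ID V"
  then obtain x i where x: "x \<in> V" and
    N: "{y. (x, y) \<in> udg V \<and> incone phi k x i y} \<noteq> {}" and
    e: "e = (x, amin (ukey ID x) {y. (x, y) \<in> udg V \<and> incone phi k x i y})"
    unfolding yao_def Let_def by (auto split: if_splits)
  let ?N = "{y. (x, y) \<in> udg V \<and> incone phi k x i y}"
  have sub: "?N \<subseteq> V - {x}" unfolding udg_def by auto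
  have "amin (ukey ID x) ?N \<in> ?N"
    using N sub assms(2) by (intro amin_in inj_on_subset[OF ukey_inj_on[OF assms(1) x]])
      (auto intro: finite_subset)
  with e show "e \<in> udg V" by simp
qed

lemma filtering_subset_yao:
  assumes "inj_on ID V" "finite V"
  shows "filtering phi k ID r V \<subseteq> yao phi k ID V"
proof
  let ?key = "\<lambda>(a, b). dkey ID a b"
  define F where "F v i = {(a, b). (a, b) \<in> yao phi k ID V \<and> b = v \<and> incone phi k v i a}" for v i
  define G where "G v i j = {(a, b). (a, b) \<in> F v i \<and>
      dist (fst (amin ?key (F v i))) v * r ^ (j - 1) \<le> dist a b \<and>
      dist a b < dist (fst (amin ?key (F v i))) v * r ^ j}" for v i and j :: nat
  have filtering_eq: "filtering phi k ID r V = (\<Union>v\<in>V. \<Union>i\<in>{..<k}. if F v i = {} then {}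
      else \<Union>j\<in>{1..}. if G v i j = {} then {} else {amin ?key (G v i j)})"
    unfolding filtering_def F_def G_def Let_def by (rule refl)
  fix e assume "e \<in> filtering phi k ID r V"
  then obtain v i j where ne: "G v i j \<noteq> {}" and e: "e = amin ?key (G v i j)"
    unfolding filtering_eq by (auto split: if_splits)
  have GF: "G v i j \<subseteq> F v i" and Fyao: "F v i \<subseteq> yao phi k ID V"
    unfolding G_def F_def by auto
  hence GV: "G v i j \<subseteq> V \<times> V" using yao_subset_udg[OF assms] udg_subset by blast
  have "e \<in> G v i j" unfolding e
  proof (rule amin_in[OF _ ne])
    show "finite (G v i j)" using GV assms(2) by (auto intro: finite_subset)
    show "inj_on ?key (G v i j)" using GV by (rule inj_on_subset[OF dkey_inj_on[OF assms(1)]])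
  qed
  with GF Fyao show "e \<in> yao phi k ID V" by blast
qed

lemma sink_tree_finite: "finite (sink_tree phi k ID n x S)"
  by (induction n arbitrary: x S) (auto simp: Let_def)

lemma sink_finite: "finite V \<Longrightarrow> finite (sink phi k ID V D)"
  unfolding sink_def by (simp add: sink_tree_finite del: sink_tree.simps)

lemma yaoyao_finite: "finite V \<Longrightarrow> finite (yaoyao phi k ID V)"
  unfolding yaoyao_def by (simp add: Let_def)

lemma lone_in_edge_pairs:
  assumes "{a. (a, v) \<in> D \<and> incone phi k v i a} = {u}"
  shows "{(a, b). (a, b) \<in> D \<and> b = v \<and> incone phi k v i a} = {(u, v)}"
  using assms by blast

lemma yao_memI:
  assumes "x \<in> V" "i < k" "{y. (x, y) \<in> udg V \<and> incone phi k x i y} = {y0}"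
  shows "(x, y0) \<in> yao phi k ID V"
  unfolding yao_def Let_def using assms by (intro UN_I[OF assms(1)] UN_I[of i]) simp_all

lemma yaoyao_memI:
  assumes "v \<in> V" "i < k" "{a. (a, v) \<in> yao phi k ID V \<and> incone phi k v i a} = {u}"
  shows "(u, v) \<in> yaoyao phi k ID V"
  unfolding yaoyao_def using assms(2)
  by (intro UN_I[OF assms(1)] UN_I[of i]) (simp_all add: Let_def lone_in_edge_pairs[OF assms(3)])

lemma sink_memI:
  assumes "v \<in> V" "i < k" "{x. (x, v) \<in> D \<and> incone phi k v i x} = {u}"
  shows "(u, v) \<in> sink phi k ID V D"
proof -
  have "{y \<in> {u}. incone phi k v i y} = {u}" using assms(3) by blast
  hence "(u, v) \<in> sink_tree phi k ID (Suc (card V)) v {u}"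
    unfolding sink_tree.simps using assms(2)
    by (intro UN_I[of i]) (simp_all only: lessThan_iff Let_def if_False insert_not_empty
        amin_singleton insertI1)
  thus ?thesis unfolding sink_def assms(3)[symmetric]
    using assms(2) by (intro UN_I[OF assms(1)] UN_I[of i]) simp_all
qed

lemma filtering_memI:
  assumes "v \<in> V" "i < k" "r > 1" "{a. (a, v) \<in> yao phi k ID V \<and> incone phi k v i a} = {u}"
  shows "(u, v) \<in> filtering phi k ID r V"
proof -
  have "u \<noteq> v" using assms(4) unfolding incone_def by blast
  hence longer: "dist u v < dist u v * r" using assms(3) by simp
  hence first_ring: "{(a, b). a = u \<and> b = v \<and> dist u v \<le> dist a b \<and> dist a b < dist u v * r}
      = {(u, v)}" by auto
  show ?thesis
    unfolding filtering_def using assms(2) longer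
    by (intro UN_I[OF assms(1)] UN_I[of i])
      (auto simp: Let_def lone_in_edge_pairs[OF assms(4)] first_ring intro!: bexI[of _ 1])
qed

lemma lone_yao_in_edge_survives:
  assumes "inj_on ID V" "finite V" "v \<in> V" "i < k" "r > 1"
    and lone: "{a. (a, v) \<in> yao phi k ID V \<and> incone phi k v i a} = {u}"
  shows "(u, v) \<in> yaoyao phi k ID V" "(u, v) \<in> yaosink phi k ID V"
    "(u, v) \<in> yaosparsesink phi k ID r V"
proof -
  have "{a. (a, v) \<in> filtering phi k ID r V \<and> incone phi k v i a} = {u}"
    using lone filtering_subset_yao[OF assms(1,2)] filtering_memI[OF assms(3-5) lone] by blast
  thus "(u, v) \<in> yaosparsesink phi k ID r V"
    unfolding yaosparsesink_def by (rule sink_memI[OF assms(3,4)])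
  show "(u, v) \<in> yaoyao phi k ID V" by (rule yaoyao_memI[OF assms(3,4) lone])
  show "(u, v) \<in> yaosink phi k ID V"
    unfolding yaosink_def by (rule sink_memI[OF assms(3,4) lone])
qed

lemma wt_mono:
  assumes "finite E" "D \<subseteq> E"
  shows "wt D \<le> wt E"
  unfolding wt_def using assms by (intro divide_right_mono sum_mono2) auto

lemma wt_eq_sum:
  assumes "finite D" "D \<inter> converse D = {}"
  shows "wt D = (\<Sum>p\<in>D. dist (fst p) (snd p))"
proof -
  have "converse D = prod.swap ` D" by auto
  hence "(\<Sum>p\<in>converse D. dist (fst p) (snd p)) = (\<Sum>p\<in>D. dist (fst p) (snd p))"
    by (simp add: sum.reindex dist_commute)
  thus ?thesis unfolding wt_def using assms by (simp add: sum.union_disjoint)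
qed

lemma elen_doubleton [simp]: "elen {a, b} = dist a b"
  unfolding elen_def
proof (rule the_equality)
  fix d assume "\<exists>x y. {a, b} = {x, y} \<and> d = dist x y"
  then show "d = dist a b" by (auto simp: doubleton_eq_iff dist_commute)
qed blast

lemma parent_edge_inj_on:
  fixes rank :: "complex \<Rightarrow> nat"
  assumes parent: "\<And>x. x \<in> A \<Longrightarrow> rank (f x) < rank x"
  shows "inj_on (\<lambda>x. {f x, x}) A"
proof (rule inj_onI)
  fix x y assume x: "x \<in> A" and y: "y \<in> A" and eq: "{f x, x} = {f y, y}"
  show "x = y"
  proof (rule ccontr)
    assume "x \<noteq> y"
    with eq have "x = f y" "y = f x" by (auto simp: doubleton_eq_iff)
    with parent[OF x] parent[OF y] show False by (metis less_asym)
  qed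
qed

lemma spanning_tree_of_parent:
  fixes rank :: "complex \<Rightarrow> nat"
  assumes "finite V" "v0 \<in> V"
    and parent: "\<And>x. x \<in> V - {v0} \<Longrightarrow> f x \<in> V \<and> rank (f x) < rank x"
  shows "spanning_tree V ((\<lambda>x. {f x, x}) ` (V - {v0}))"
proof -
  define T where "T = (\<lambda>x. {f x, x}) ` (V - {v0})"
  define R where "R = {(a, b). {a, b} \<in> T}"
  have to_root: "(x, v0) \<in> R\<^sup>*" if "x \<in> V" for x
    using that
  proof (induction "rank x" arbitrary: x rule: less_induct)
    case less
    show ?case
    proof (cases "x = v0")
      case False
      with less.prems have "x \<in> V - {v0}" by simp
      hence "(x, f x) \<in> R" "(f x, v0) \<in> R\<^sup>*"
        using parent less.hyps unfolding R_def T_def by (auto simp: insert_commute)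
      thus ?thesis by (rule converse_rtrancl_into_rtrancl)
    qed simp
  qed
  have "R\<inverse> = R" unfolding R_def by (auto simp: insert_commute)
  hence from_root: "(v0, y) \<in> R\<^sup>*" if "y \<in> V" for y
    using to_root[OF that] rtrancl_converse[of R] by auto
  have "T \<subseteq> {{x, y} |x y. x \<in> V \<and> y \<in> V \<and> x \<noteq> y}"
    unfolding T_def using parent by fastforce
  moreover have "card T = card V - 1"
    unfolding T_def using parent_edge_inj_on[of "V - {v0}" rank f] parent assms(1,2)
    by (simp add: card_image)
  moreover have "(x, y) \<in> R\<^sup>*" if "x \<in> V" "y \<in> V" for x y
    using to_root[OF that(1)] from_root[OF that(2)] by (rule rtrancl_trans)
  ultimately show ?thesis unfolding spanning_tree_def T_def R_def by blast
qed

lemma finite_spanning_trees: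
  assumes "finite V"
  shows "finite {T. spanning_tree V T}"
proof -
  have "{{x, y} |x y. x \<in> V \<and> y \<in> V \<and> x \<noteq> y} \<subseteq> (\<lambda>(x, y). {x, y}) ` (V \<times> V)" by auto
  hence "finite {{x, y} |x y. x \<in> V \<and> y \<in> V \<and> x \<noteq> y}"
    using assms by (auto intro: finite_subset)
  thus ?thesis unfolding spanning_tree_def by (auto intro: finite_subset[of _ "Pow _"])
qed

lemma wt_MST_le_parent_sum:
  fixes rank :: "complex \<Rightarrow> nat"
  assumes "finite V" "v0 \<in> V"
    and parent: "\<And>x. x \<in> V - {v0} \<Longrightarrow> f x \<in> V \<and> rank (f x) < rank x"
  shows "wt_MST V \<le> (\<Sum>x\<in>V - {v0}. dist (f x) x)"
proof -
  let ?T = "(\<lambda>x. {f x, x}) ` (V - {v0})"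
  have "wt_MST V \<le> (\<Sum>e\<in>?T. elen e)"
    unfolding wt_MST_def
    using spanning_tree_of_parent[OF assms] finite_spanning_trees[OF assms(1)] by simp
  also have "\<dots> = (\<Sum>x\<in>V - {v0}. dist (f x) x)"
    using parent_edge_inj_on[of "V - {v0}" rank f] parent by (simp add: sum.reindex)
  finally show ?thesis .
qed

definition left_rail :: "real \<Rightarrow> nat \<Rightarrow> complex" where
  "left_rail d j = Complex 0 (real j * d)"

definition right_rail :: "real \<Rightarrow> nat \<Rightarrow> complex" where
  "right_rail d j = Complex 1 (real j * d)"

definition ladder :: "nat \<Rightarrow> real \<Rightarrow> complex set" where
  "ladder m d = left_rail d ` {..<m} \<union> right_rail d ` {..<m}"

lemma finite_ladder [simp]: "finite (ladder m d)"
  unfolding ladder_def by simp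

lemma card_ladder:
  assumes "d > 0"
  shows "card (ladder m d) = 2 * m"
proof -
  have "inj_on (left_rail d) {..<m}" "inj_on (right_rail d) {..<m}"
    using assms by (auto intro!: inj_onI simp: left_rail_def right_rail_def)
  moreover have "left_rail d ` {..<m} \<inter> right_rail d ` {..<m} = {}"
    by (auto simp: left_rail_def right_rail_def)
  ultimately show ?thesis unfolding ladder_def by (simp add: card_Un_disjoint card_image)
qed

lemma ladder_Re: "x \<in> ladder m d \<Longrightarrow> Re x = 0 \<or> Re x = 1"
  unfolding ladder_def left_rail_def right_rail_def by auto

lemma dist_rail_same:
  "dist (left_rail d j) (left_rail d l) = \<bar>real j * d - real l * d\<bar>"
  "dist (right_rail d j) (right_rail d l) = \<bar>real j * d - real l * d\<bar>"
  by (simp_all add: left_rail_def right_rail_def dist_norm complex_norm complex_diff)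

lemma dist_ladder_horizontal:
  assumes "x \<in> ladder m d" "y \<in> ladder m d" "Im y = Im x" "y \<noteq> x"
  shows "dist x y = 1"
proof -
  have "Re y \<noteq> Re x" using assms(3,4) by (auto simp: complex_eq_iff)
  hence "\<bar>Re x - Re y\<bar> = 1" using ladder_Re[OF assms(1)] ladder_Re[OF assms(2)] by auto
  thus ?thesis using assms(3) by (simp add: dist_norm cmod_def)
qed

lemma ladder_udg_axis_parallel:
  assumes "(x, y) \<in> udg (ladder m d)"
  shows "Re (y - x) = 0 \<or> Im (y - x) = 0"
proof (rule ccontr)
  assume "\<not> ?thesis"
  hence "Re y \<noteq> Re x" "Im y \<noteq> Im x" by auto
  moreover have x: "x \<in> ladder m d" and y: "y \<in> ladder m d" and "dist x y \<le> 1"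
    using assms unfolding udg_def by auto
  ultimately have "(Re x - Re y)\<^sup>2 = 1" "(Im x - Im y)\<^sup>2 > 0"
    using ladder_Re[OF x] ladder_Re[OF y] by (auto simp del: zero_less_power2)
  hence "1 < sqrt ((Re x - Re y)\<^sup>2 + (Im x - Im y)\<^sup>2)"
    by (intro real_less_rsqrt) simp
  with \<open>dist x y \<le> 1\<close> show False by (simp add: dist_norm cmod_def)
qed

lemma ladder_horizontal_unique:
  assumes "x \<in> ladder m d" "y \<in> ladder m d" "p \<in> ladder m d"
    and "Im y = Im x" "y \<noteq> x" "Im p = Im x" "p \<noteq> x"
  shows "y = p"
proof -
  have "Re y \<noteq> Re x" "Re p \<noteq> Re x" using assms(4-7) by (auto simp: complex_eq_iff)
  hence "Re y = Re p" using ladder_Re[OF assms(1)] ladder_Re[OF assms(2)] ladder_Re[OF assms(3)] by auto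
  with assms(4,6) show ?thesis by (simp add: complex_eq_iff)
qed

lemma ladder_cone_of_partner:
  assumes "k \<ge> 4" "x \<in> ladder m d" "p \<in> ladder m d" "Im p = Im x" "p \<noteq> x"
  shows "{y. (x, y) \<in> udg (ladder m d) \<and> incone phi k x (cone_of phi k x p) y} = {p}"
proof (intro equalityI subsetI)
  fix y assume "y \<in> {y. (x, y) \<in> udg (ladder m d) \<and> incone phi k x (cone_of phi k x p) y}"
  hence y: "(x, y) \<in> udg (ladder m d)" "y \<noteq> x" "cone_of phi k x y = cone_of phi k x p"
    unfolding incone_def by auto
  have "Re (y - x) \<noteq> 0"
    using cone_of_horizontal_neq_vertical[OF assms(1), of p x y x phi] assms(4,5) y(2,3) by auto
  hence "Im y = Im x" using ladder_udg_axis_parallel[OF y(1)] by simp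
  moreover have "y \<in> ladder m d" using y(1) unfolding udg_def by simp
  ultimately show "y \<in> {p}" using ladder_horizontal_unique assms(2-5) y(2) by blast
next
  fix y assume "y \<in> {p}"
  thus "y \<in> {y. (x, y) \<in> udg (ladder m d) \<and> incone phi k x (cone_of phi k x p) y}"
    using assms(2-5) dist_ladder_horizontal[of x m d p] unfolding udg_def incone_def by auto
qed

lemma ladder_lone_yao_in_edge:
  assumes "k \<ge> 4" "inj_on ID (ladder m d)" "x \<in> ladder m d" "p \<in> ladder m d"
    and "Im p = Im x" "p \<noteq> x"
  shows "{a. (a, p) \<in> yao phi k ID (ladder m d) \<and> incone phi k p (cone_of phi k p x) a} = {x}"
proof (intro equalityI subsetI)
  fix a assume "a \<in> {a. (a, p) \<in> yao phi k ID (ladder m d) \<and> incone phi k p (cone_of phi k p x) a}"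
  hence "(a, p) \<in> udg (ladder m d)" and a: "incone phi k p (cone_of phi k p x) a"
    using yao_subset_udg[OF assms(2) finite_ladder] by auto
  hence "(p, a) \<in> udg (ladder m d)" unfolding udg_def by (auto simp: dist_commute)
  with a show "a \<in> {x}"
    using ladder_cone_of_partner[OF assms(1,4,3)] assms(5,6) by auto
next
  fix a assume "a \<in> {x}"
  have "0 < k" using assms(1) by simp
  have "(x, p) \<in> yao phi k ID (ladder m d)"
    using ladder_cone_of_partner[OF assms(1,3,4,5,6)]
    by (rule yao_memI[OF assms(3) cone_of_less[OF \<open>0 < k\<close>]])
  with \<open>a \<in> {x}\<close> assms(6)
  show "a \<in> {a. (a, p) \<in> yao phi k ID (ladder m d) \<and> incone phi k p (cone_of phi k p x) a}"
    unfolding incone_def by auto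
qed

lemma ladder_rung_survives:
  assumes "k \<ge> 4" "r > 1" "inj_on ID (ladder m d)" "j < m"
  shows "(left_rail d j, right_rail d j) \<in> yaoyao phi k ID (ladder m d)"
    "(left_rail d j, right_rail d j) \<in> yaosink phi k ID (ladder m d)"
    "(left_rail d j, right_rail d j) \<in> yaosparsesink phi k ID r (ladder m d)"
proof -
  have in_ladder: "left_rail d j \<in> ladder m d" "right_rail d j \<in> ladder m d"
    using assms(4) unfolding ladder_def by auto
  have horizontal: "Im (right_rail d j) = Im (left_rail d j)" "right_rail d j \<noteq> left_rail d j"
    by (simp_all add: left_rail_def right_rail_def complex_eq_iff)
  have cone: "cone_of phi k (right_rail d j) (left_rail d j) < k"
    using assms(1) by (simp add: cone_of_less)
  show "(left_rail d j, right_rail d j) \<in> yaoyao phi k ID (ladder m d)"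
    "(left_rail d j, right_rail d j) \<in> yaosink phi k ID (ladder m d)"
    "(left_rail d j, right_rail d j) \<in> yaosparsesink phi k ID r (ladder m d)"
    by (fact lone_yao_in_edge_survives[OF assms(3) finite_ladder in_ladder(2) cone assms(2)
          ladder_lone_yao_in_edge[OF assms(1,3) in_ladder horizontal]])+
qed

lemma wt_ge_rungs:
  assumes "d > 0" "finite D" "\<And>j. j < m \<Longrightarrow> (left_rail d j, right_rail d j) \<in> D"
  shows "real m \<le> wt D"
proof -
  define R where "R = (\<lambda>j. (left_rail d j, right_rail d j)) ` {..<m}"
  have "inj_on (\<lambda>j. (left_rail d j, right_rail d j)) {..<m}"
    using assms(1) by (auto intro!: inj_onI simp: left_rail_def)
  moreover have "dist (left_rail d j) (right_rail d j) = 1" for j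
    by (simp add: left_rail_def right_rail_def dist_norm complex_norm complex_diff)
  moreover have "R \<inter> converse R = {}"
    unfolding R_def by (auto simp: left_rail_def right_rail_def)
  ultimately have "real m = wt R" unfolding R_def by (simp add: wt_eq_sum sum.reindex)
  also have "\<dots> \<le> wt D" using assms(2,3) unfolding R_def by (intro wt_mono) auto
  finally show ?thesis .
qed

lemma wt_MST_ladder_le:
  assumes "d > 0" "m \<ge> 1"
  shows "wt_MST (ladder m d) \<le> 1 + 2 * real m * (real m * d)"
proof -
  let ?V = "ladder m d" and ?P = "left_rail d 0" and ?Q = "right_rail d 0"
  define f where "f x = (if Re x = 0 \<or> x = ?Q then ?P else ?Q)" for x
  define rank :: "complex \<Rightarrow> nat" where "rank x = (if x = ?P then 0 else if x = ?Q then 1 else 2)" for x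
  have PQ: "?P \<in> ?V" "?Q \<in> ?V" "?Q \<noteq> ?P" "Re ?Q \<noteq> 0"
    using assms(2) by (auto simp: ladder_def left_rail_def right_rail_def)
  have parent: "f x \<in> ?V \<and> rank (f x) < rank x" if "x \<in> ?V - {?P}" for x
    using that PQ unfolding f_def rank_def by auto
  have far: "dist (f x) x \<le> real m * d" if x: "x \<in> ?V - {?P} - {?Q}" for x
  proof -
    obtain l where l: "l < m" "x = left_rail d l \<or> x = right_rail d l"
      using x unfolding ladder_def by auto
    have "\<bar>0 * d - real l * d\<bar> \<le> real m * d" using l(1) assms(1) by simp
    moreover have "f x = ?P" if "x = left_rail d l"
      using that unfolding f_def by (simp add: left_rail_def)
    moreover have "f x = ?Q" if "x = right_rail d l"
      using that x unfolding f_def by (simp add: right_rail_def)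
    ultimately show ?thesis using l(2) by (auto simp: dist_rail_same)
  qed
  have "card (?V - {?P} - {?Q}) \<le> 2 * m"
    using card_ladder[OF assms(1), of m] card_mono[of ?V "?V - {?P} - {?Q}"] by auto
  hence "real (card (?V - {?P} - {?Q})) * (real m * d) \<le> 2 * real m * (real m * d)"
    using assms(1) by (intro mult_right_mono) auto
  hence "(\<Sum>x\<in>?V - {?P} - {?Q}. dist (f x) x) \<le> 2 * real m * (real m * d)"
    using sum_bounded_above[of "?V - {?P} - {?Q}" "\<lambda>x. dist (f x) x", OF far] by linarith
  moreover have "dist (f ?Q) ?Q = 1"
    by (simp add: f_def left_rail_def right_rail_def dist_norm complex_norm complex_diff)
  moreover have "(\<Sum>x\<in>?V - {?P}. dist (f x) x) = dist (f ?Q) ?Q + (\<Sum>x\<in>?V - {?P} - {?Q}. dist (f x) x)"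
    using PQ by (intro sum.remove) auto
  ultimately show ?thesis
    using wt_MST_le_parent_sum[OF finite_ladder PQ(1) parent] by linarith
qed

theorem mainTheorem7:
  fixes k :: nat and r :: real
  assumes "k \<ge> 6" and "r > 1"
  shows "\<exists>c>0. \<forall>phi::real. \<forall>n::nat. even n \<and> n \<ge> 2 \<longrightarrow>
           (\<exists>(V::complex set) (ID::complex \<Rightarrow> nat).
              finite V \<and> card V = n \<and> inj_on ID V \<and>
              wt (yaoyao phi k ID V) \<ge> c * real n * wt_MST V \<and>
              wt (yaosink phi k ID V) \<ge> c * real n * wt_MST V \<and>
              wt (yaosparsesink phi k ID r V) \<ge> c * real n * wt_MST V)"
proof (intro exI[of _ "1/4"] conjI allI impI)
  fix phi :: real and n :: nat
  assume "even n \<and> n \<ge> 2"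
  then obtain m where n: "n = 2 * m" and m: "m \<ge> 1" by (auto elim: evenE)
  define d :: real where "d = 1 / (2 * real m ^ 2)"
  have d: "d > 0" and "2 * real m * (real m * d) = 1"
    using m unfolding d_def by (simp_all add: power2_eq_square)
  hence "wt_MST (ladder m d) \<le> 2" using wt_MST_ladder_le[OF d m] by simp
  hence "1/4 * real n * wt_MST (ladder m d) \<le> real m"
    using n by (simp add: mult_left_mono)
  moreover obtain ID :: "complex \<Rightarrow> nat" where ID: "inj_on ID (ladder m d)"
    using finite_imp_inj_to_nat_seg[OF finite_ladder] by metis
  moreover have "real m \<le> wt (yaoyao phi k ID (ladder m d))"
    "real m \<le> wt (yaosink phi k ID (ladder m d))"
    "real m \<le> wt (yaosparsesink phi k ID r (ladder m d))"
    using assms ladder_rung_survives[OF _ assms(2) ID] yaoyao_finite sink_finite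
    by (intro wt_ge_rungs[OF d]; simp add: yaosink_def yaosparsesink_def)+
  ultimately show "\<exists>V ID. finite V \<and> card V = n \<and> inj_on ID V \<and>
      1/4 * real n * wt_MST V \<le> wt (yaoyao phi k ID V) \<and>
      1/4 * real n * wt_MST V \<le> wt (yaosink phi k ID V) \<and>
      1/4 * real n * wt_MST V \<le> wt (yaosparsesink phi k ID r V)"
    using card_ladder[OF d] n by (intro exI[of _ "ladder m d"] exI[of _ ID]) auto
qed simp

end
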